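(* Under Assumptions (A1) and (A2) of the context, let $B$ be the solution on $[0,T]$ of the constrained ODE and $\lambda^\ast,\pi^\ast$ as in the context. Then for all $t\in[0,T]$, $$\tfrac12\tfrac b{1-b}\eta^2-\tfrac12\tfrac b{1-b}\big(\lambda^\ast(B(T-t))+\sigma\rho B(T-t)\big)^2-\tfrac12b^2\rho^2\pi^\ast(t)^2+b\tfrac{\rho\kappa}\sigma\pi^\ast(t)+\tfrac b{1-b}\tfrac\rho\sigma\big[(\lambda^\ast)'(B(T-t))+\sigma\rho\big]B'(T-t)<\tfrac12\tfrac{\kappa^2}{\sigma^2}.$$
   Context: Parameters: $T>0$; $\eta,\kappa,\sigma>0$; $\rho\in(-1,1)$; $b<1$, $b\ne0$; $K=[\alpha,\beta]$, $-\infty\le\alpha<\beta\le\infty$; $\delta_K(x)=-\alpha x\mathbf 1_{\{x>0\}}-\beta x\mathbf 1_{\{x<0\}}$. $B_-=\frac{(1-b)\alpha-\eta}\sigma$, $B_+=\frac{(1-b)\beta-\eta}\sigma$; $r_0^-=\tfrac12 b\alpha((1-b)\alpha-2\eta)$, $r_1^-=b\sigma\rho\alpha-\kappa$, $r_2^-=\sigma^2$; $r_0=-\frac b{2(1-b)}\eta^2$, $r_1=\frac b{1-b}\eta\sigma\rho-\kappa$, $r_2=\sigma^2(1+\frac b{1-b}\rho^2)$; $r_0^+=\tfrac12 b\beta((1-b)\beta-2\eta)$, $r_1^+=b\sigma\rho\beta-\kappa$, $r_2^+=\sigma^2$. For a triple $(c_0,c_1,c_2)$: $c_3=\sqrt{c_1^2+2c_0c_2}$,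 $t_+(y_0)=\frac1{c_3}\ln\frac{c_1+c_2y_0+c_3}{c_1+c_2y_0-c_3}$ if $c_1+c_2y_0-c_3>0$, else $\infty$. (A1): (i) $\max\{\frac b{1-b}\eta(\frac{\kappa\rho}\sigma+\frac\eta2),\ b\alpha(\eta-\frac\alpha2+\frac{\kappa\rho}\sigma+\frac12\alpha b(1-\rho^2)),\ b\beta(\eta-\frac\beta2+\frac{\kappa\rho}\sigma+\frac12\beta b(1-\rho^2))\}<\frac{\kappa^2}{2\sigma^2}$; (ii) for each triple $(r_0^-,r_1^-,r_2^-),(r_0,r_1,r_2),(r_0^+,r_1^+,r_2^+)$ and each $y_0\in\{\frac{B_-}\rho\mathbf 1_{\{\rho\ne0\}},\frac{B_+}\rho\mathbf 1_{\{\rho\ne0\}},0\}$, $t_+(y_0)>T$. (A2): $\max\{\frac{b\rho}\kappa\alpha,\frac{b\rho}\kappa\beta\}\le\frac\kappa{\sigma^2}$. Constrained ODE: $B'(\tau)=-\kappa B+\frac12\sigma^2B^2+\frac12\frac b{1-b}\inf_{\lambda\in\mathbb R}(2(1-b)\delta_K(\lambda)+(\eta+\lambda+\sigma\rho B)^2)$, $B(0)=0$ (unique solution on $[0,T]$ under (A1)). $\lambda^\ast(B)=[(1-b)\alpha-(\eta+\sigma\rho B)]\mathbf 1_{\{\rho B<B_-\}}+[(1-b)\beta-(\eta+\sigma\rho B)]\mathbf 1_{\{\rho B>B_+\}}$, a piecewise affine function whose derivative $(\lambda^\ast)'(B)$ equals $-\sigma\rho$ when $\rho B<B_-$ or $\rho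 B>B_+$ and $0$ when $B_-<\rho B<B_+$ (at the kinks either one-sided value may be used). $\pi^\ast(t)=\frac1{1-b}(\eta+\lambda^\ast(B(T-t))+\sigma\rho B(T-t))$. *)

theory Defs
  imports "HOL-Analysis.Analysis" "HOL-Library.Extended_Real"
begin

text \<open>The constraint interval K = [al, be] has extended-real endpoints,
  -\<infinity> \<le> al < be \<le> \<infinity>.\<close>
definition deltaK :: "ereal \<Rightarrow> ereal \<Rightarrow> real \<Rightarrow> ereal" where
  "deltaK al be x = (if x > 0 then - al * ereal x else if x < 0 then - be * ereal x else 0)"

definition Bminus :: "real \<Rightarrow> real \<Rightarrow> real \<Rightarrow> ereal \<Rightarrow> ereal" where
  "Bminus b eta sig al = (ereal (1 - b) * al - ereal eta) / ereal sig"

definition Bplus :: "real \<Rightarrow> real \<Rightarrow> real \<Rightarrow> ereal \<Rightarrow> ereal" where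
  "Bplus b eta sig be = (ereal (1 - b) * be - ereal eta) / ereal sig"

definition tplus :: "real \<Rightarrow> real \<Rightarrow> real \<Rightarrow> real \<Rightarrow> ereal" where
  "tplus c0 c1 c2 y0 =
     (let c3 = sqrt (c1\<^sup>2 + 2 * c0 * c2) in
      if c1 + c2 * y0 - c3 > 0
      then ereal (1 / c3 * ln ((c1 + c2 * y0 + c3) / (c1 + c2 * y0 - c3)))
      else \<infinity>)"

definition ODErhs :: "real \<Rightarrow> real \<Rightarrow> real \<Rightarrow> real \<Rightarrow> real \<Rightarrow> ereal \<Rightarrow> ereal \<Rightarrow> real \<Rightarrow> real" where
  "ODErhs eta kappa sig rho b al be x =
     - kappa * x + 1/2 * sig\<^sup>2 * x\<^sup>2
     + 1/2 * (b / (1 - b)) *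
       real_of_ereal (INF lam\<in>(UNIV::real set).
          ereal (2 * (1 - b)) * deltaK al be lam + ereal ((eta + lam + sig * rho * x)\<^sup>2))"

definition lamstar :: "real \<Rightarrow> real \<Rightarrow> real \<Rightarrow> real \<Rightarrow> ereal \<Rightarrow> ereal \<Rightarrow> real \<Rightarrow> real" where
  "lamstar eta sig rho b al be x =
     (if ereal (rho * x) < Bminus b eta sig al
        then (1 - b) * real_of_ereal al - (eta + sig * rho * x) else 0)
   + (if ereal (rho * x) > Bplus b eta sig be
        then (1 - b) * real_of_ereal be - (eta + sig * rho * x) else 0)"

definition assumption_A1 :: "real \<Rightarrow> real \<Rightarrow> real \<Rightarrow> real \<Rightarrow> real \<Rightarrow> real \<Rightarrow> ereal \<Rightarrow> ereal \<Rightarrow> bool" where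
  "assumption_A1 T eta kappa sig rho b al be =
    (let r0 = - b / (2 * (1 - b)) * eta\<^sup>2;
         r1 = b / (1 - b) * eta * sig * rho - kappa;
         r2 = sig\<^sup>2 * (1 + b / (1 - b) * rho\<^sup>2);
         a = real_of_ereal al; c = real_of_ereal be;
         r0m = 1/2 * b * a * ((1 - b) * a - 2 * eta);
         r1m = b * sig * rho * a - kappa;
         r2m = sig\<^sup>2;
         r0p = 1/2 * b * c * ((1 - b) * c - 2 * eta);
         r1p = b * sig * rho * c - kappa;
         r2p = sig\<^sup>2;
         bound = kappa\<^sup>2 / (2 * sig\<^sup>2);
         Y = {0} \<union> (if \<bar>al\<bar> \<noteq> \<infinity> \<and> rho \<noteq> 0 then {real_of_ereal (Bminus b eta sig al) / rho} else {})
                 \<union> (if \<bar>be\<bar> \<noteq> \<infinity> \<and> rho \<noteq> 0 then {real_of_ereal (Bplus b eta sig be) / rho} else {});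
         Trip = {(r0, r1, r2)}
                 \<union> (if \<bar>al\<bar> \<noteq> \<infinity> then {(r0m, r1m, r2m)} else {})
                 \<union> (if \<bar>be\<bar> \<noteq> \<infinity> then {(r0p, r1p, r2p)} else {})
     in b / (1 - b) * eta * (kappa * rho / sig + eta / 2) < bound
      \<and> (\<bar>al\<bar> \<noteq> \<infinity> \<longrightarrow>
           b * a * (eta - a / 2 + kappa * rho / sig + 1/2 * a * b * (1 - rho\<^sup>2)) < bound)
      \<and> (\<bar>be\<bar> \<noteq> \<infinity> \<longrightarrow>
           b * c * (eta - c / 2 + kappa * rho / sig + 1/2 * c * b * (1 - rho\<^sup>2)) < bound)
      \<and> (\<forall>(c0, c1, c2)\<in>Trip. \<forall>y0\<in>Y. tplus c0 c1 c2 y0 > ereal T))"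

definition assumption_A2 :: "real \<Rightarrow> real \<Rightarrow> real \<Rightarrow> real \<Rightarrow> ereal \<Rightarrow> ereal \<Rightarrow> bool" where
  "assumption_A2 kappa sig rho b al be =
     ((\<bar>al\<bar> \<noteq> \<infinity> \<longrightarrow> b * rho / kappa * real_of_ereal al \<le> kappa / sig\<^sup>2)
    \<and> (\<bar>be\<bar> \<noteq> \<infinity> \<longrightarrow> b * rho / kappa * real_of_ereal be \<le> kappa / sig\<^sup>2))"

end

theory Submission
  imports Defs
begin

(*
  The inequality is pointwise in the value x = B(T - t): B' enters only through the ODE.
  With \<pi> = \<pi>*(t), the left-hand side is pi_rate \<pi> + b/(1-b) \<rho>/\<sigma> (\<lambda>*' + \<sigma>\<rho>) B'.
  Where the constraint binds, or at a kink where \<lambda>*' = -\<sigma>\<rho>, \<pi> is a finite endpoint of K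
  and the B' term vanishes, so (A1)(i) at \<alpha> or \<beta> applies.  Elsewhere the infimum in the
  ODE is attained at \<lambda> = 0, and then pi_rate \<pi> plus the B' term collapses to the constant
  b/(1-b) \<eta> (\<kappa>\<rho>/\<sigma> + \<eta>/2), the first entry of (A1)(i).
*)

lemma ereal_less_shift_div_iff:
  assumes "sig > 0"
  shows "ereal z < (A - ereal eta) / ereal sig \<longleftrightarrow> ereal (eta + sig * z) < A"
  using assms by (cases A) (auto simp: pos_less_divide_eq algebra_simps)

lemma shift_div_less_ereal_iff:
  assumes "sig > 0"
  shows "(A - ereal eta) / ereal sig < ereal z \<longleftrightarrow> A < ereal (eta + sig * z)"
  using assms by (cases A) (auto simp: pos_divide_less_eq algebra_simps)

lemma ereal_mult_eq_realD:
  assumes "d > 0" "ereal d * A = ereal y"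
  shows "A = ereal (y / d)"
  using assms by (cases A) (auto simp: field_simps split: if_splits)

text \<open>(A1)(i) bounds this function of the investment fraction \<pi> at \<pi> = \<alpha> and \<pi> = \<beta>.\<close>
definition pi_rate :: "real \<Rightarrow> real \<Rightarrow> real \<Rightarrow> real \<Rightarrow> real \<Rightarrow> real \<Rightarrow> real" where
  "pi_rate eta kappa sig rho b p = b * p * (eta - p / 2 + kappa * rho / sig + 1/2 * p * b * (1 - rho\<^sup>2))"

lemma quadratic_terms_eq_pi_rate:
  assumes "b < 1" "sig > 0"
  shows "1/2 * (b / (1 - b)) * eta\<^sup>2 - 1/2 * (b / (1 - b)) * (l + c)\<^sup>2
        - 1/2 * b\<^sup>2 * rho\<^sup>2 * ((eta + l + c) / (1 - b))\<^sup>2 + b * (rho * kappa / sig) * ((eta + l + c) / (1 - b))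
      = pi_rate eta kappa sig rho b ((eta + l + c) / (1 - b))"
proof -
  define d where "d = 1 - b"
  have d: "d > 0" "b = 1 - d" using assms by (auto simp: d_def)
  show ?thesis unfolding pi_rate_def d_def[symmetric] using d(1) assms(2) unfolding d(2)
    by (simp add: field_simps power2_eq_square)
qed

lemma pi_rate_unconstrained_eq:
  assumes "b < 1" "sig > 0"
  shows "pi_rate eta kappa sig rho b ((eta + sig * rho * x) / (1 - b))
      + (b / (1 - b)) * (rho / sig) * (sig * rho)
        * (- kappa * x + 1/2 * sig\<^sup>2 * x\<^sup>2 + 1/2 * (b / (1 - b)) * (eta + sig * rho * x)\<^sup>2)
    = b / (1 - b) * eta * (kappa * rho / sig + eta / 2)"
proof -
  define d where "d = 1 - b"
  have d: "d > 0" "b = 1 - d" using assms(1) by (auto simp: d_def)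
  show ?thesis unfolding pi_rate_def d_def[symmetric] using d(1) assms(2) unfolding d(2)
    by (simp add: field_simps power2_eq_square)
qed

lemma square_le_penalised_square:
  fixes y lam d a :: real
  assumes "0 \<le> lam * (y - d * a)"
  shows "y\<^sup>2 \<le> 2 * d * (- a * lam) + (y + lam)\<^sup>2"
proof -
  have "2 * d * (- a * lam) + (y + lam)\<^sup>2 = y\<^sup>2 + 2 * (lam * (y - d * a)) + lam\<^sup>2"
    by (simp add: power2_eq_square algebra_simps)
  then show ?thesis using assms by simp
qed

lemma penalised_square_lower:
  assumes d: "d > 0" and lo: "ereal d * al \<le> ereal y" and hi: "ereal y \<le> ereal d * be"
  shows "ereal (y\<^sup>2) \<le> ereal (2 * d) * deltaK al be lam + ereal ((y + lam)\<^sup>2)"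
proof -
  consider "lam > 0" | "lam < 0" | "lam = 0" by linarith
  then show ?thesis
  proof cases
    case 1
    show ?thesis
    proof (cases al)
      case (real a)
      with lo d have "d * a \<le> y" by simp
      with 1 have "0 \<le> lam * (y - d * a)" by simp
      then have "y\<^sup>2 \<le> 2 * d * (- a * lam) + (y + lam)\<^sup>2" by (rule square_le_penalised_square)
      with 1 real show ?thesis by (simp add: deltaK_def)
    qed (use lo d 1 in \<open>simp_all add: deltaK_def\<close>)
  next
    case 2
    show ?thesis
    proof (cases be)
      case (real a)
      with hi d have "y \<le> d * a" by simp
      with 2 have "0 \<le> lam * (y - d * a)" by (intro mult_nonpos_nonpos) auto
      then have "y\<^sup>2 \<le> 2 * d * (- a * lam) + (y + lam)\<^sup>2" by (rule square_le_penalised_square)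
      with 2 real show ?thesis by (simp add: deltaK_def)
    qed (use hi d 2 in \<open>simp_all add: deltaK_def\<close>)
  qed (simp add: deltaK_def)
qed

lemma INF_penalised_square:
  assumes "d > 0" "ereal d * al \<le> ereal y" "ereal y \<le> ereal d * be"
  shows "(INF lam. ereal (2 * d) * deltaK al be lam + ereal ((y + lam)\<^sup>2)) = ereal (y\<^sup>2)"
proof (rule antisym)
  show "(INF lam. ereal (2 * d) * deltaK al be lam + ereal ((y + lam)\<^sup>2)) \<le> ereal (y\<^sup>2)"
    by (rule INF_lower2[of 0]) (auto simp: deltaK_def)
qed (use penalised_square_lower[OF assms] in \<open>rule INF_greatest\<close>)

lemma ODErhs_between:
  assumes "b < 1"
    and "ereal (1 - b) * al \<le> ereal (eta + sig * rho * x)" "ereal (eta + sig * rho * x) \<le> ereal (1 - b) * be"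
  shows "ODErhs eta kappa sig rho b al be x
    = - kappa * x + 1/2 * sig\<^sup>2 * x\<^sup>2 + 1/2 * (b / (1 - b)) * (eta + sig * rho * x)\<^sup>2"
proof -
  have "(INF lam. ereal (2 * (1 - b)) * deltaK al be lam + ereal ((eta + lam + sig * rho * x)\<^sup>2))
      = ereal ((eta + sig * rho * x)\<^sup>2)"
    using INF_penalised_square[of "1 - b" al "eta + sig * rho * x" be] assms by (simp only: add_ac)
  then show ?thesis by (simp add: ODErhs_def)
qed

lemma less_Bminus_iff:
  "sig > 0 \<Longrightarrow> ereal (rho * x) < Bminus b eta sig al \<longleftrightarrow> ereal (eta + sig * rho * x) < ereal (1 - b) * al"
  unfolding Bminus_def by (simp add: ereal_less_shift_div_iff mult.assoc)

lemma Bminus_less_iff: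
  "sig > 0 \<Longrightarrow> Bminus b eta sig al < ereal (rho * x) \<longleftrightarrow> ereal (1 - b) * al < ereal (eta + sig * rho * x)"
  unfolding Bminus_def by (simp add: shift_div_less_ereal_iff mult.assoc)

lemma less_Bplus_iff:
  "sig > 0 \<Longrightarrow> ereal (rho * x) < Bplus b eta sig be \<longleftrightarrow> ereal (eta + sig * rho * x) < ereal (1 - b) * be"
  unfolding Bplus_def by (simp add: ereal_less_shift_div_iff mult.assoc)

lemma Bplus_less_iff:
  "sig > 0 \<Longrightarrow> Bplus b eta sig be < ereal (rho * x) \<longleftrightarrow> ereal (1 - b) * be < ereal (eta + sig * rho * x)"
  unfolding Bplus_def by (simp add: shift_div_less_ereal_iff mult.assoc)

lemma assumption_A1_interior:
  "assumption_A1 T eta kappa sig rho b al be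
    \<Longrightarrow> b / (1 - b) * eta * (kappa * rho / sig + eta / 2) < kappa\<^sup>2 / (2 * sig\<^sup>2)"
  by (simp add: assumption_A1_def Let_def)

lemma assumption_A1_endpoint:
  "assumption_A1 T eta kappa sig rho b al be \<Longrightarrow> ereal a \<in> {al, be}
    \<Longrightarrow> pi_rate eta kappa sig rho b a < kappa\<^sup>2 / (2 * sig\<^sup>2)"
  by (auto simp: assumption_A1_def Let_def pi_rate_def)

lemma control_regions:
  fixes d y ls dl s :: real
  assumes d: "d > 0" and K: "al < be"
    and ls: "ls = (if ereal y < ereal d * al then d * real_of_ereal al - y else 0)
                + (if ereal d * be < ereal y then d * real_of_ereal be - y else 0)"
    and dl_out: "ereal y < ereal d * al \<or> ereal d * be < ereal y \<Longrightarrow> dl = - s"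
    and dl_in: "ereal d * al < ereal y \<and> ereal y < ereal d * be \<Longrightarrow> dl = 0"
    and dl_kink: "dl \<in> {- s, 0}"
  obtains (endpoint) a where "ereal a \<in> {al, be}" "y + ls = d * a" "dl + s = 0"
    | (between) "ls = 0" "dl = 0" "ereal d * al \<le> ereal y" "ereal y \<le> ereal d * be"
proof -
  have mono: "ereal d * al \<le> ereal d * be"
    using K d by (intro ereal_mult_left_mono) auto
  consider (below) "ereal y < ereal d * al" | (above) "ereal d * be < ereal y"
    | (mid) "ereal d * al \<le> ereal y" "ereal y \<le> ereal d * be"
    by force
  then show thesis
  proof cases
    case below
    then obtain a where a: "al = ereal a"
      using K d by (cases al) auto
    have "\<not> ereal d * be < ereal y" using below mono by simp
    then show thesis
      using endpoint[of a] below a ls dl_out by simp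
  next
    case above
    then obtain a where a: "be = ereal a"
      using K d by (cases be) auto
    have "\<not> ereal y < ereal d * al" using above mono by simp
    then show thesis
      using endpoint[of a] above a ls dl_out by simp
  next
    case mid
    then have "\<not> ereal y < ereal d * al" "\<not> ereal d * be < ereal y" by auto
    then have ls0: "ls = 0" using ls by simp
    show thesis
    proof (cases "dl = 0")
      case True
      show thesis by (rule between) (use mid ls0 True in auto)
    next
      case False
      then have "dl + s = 0" using dl_kink by auto
      from False dl_in mid obtain A where "A \<in> {al, be}" "ereal d * A = ereal y"
        by fastforce
      then show thesis
        using endpoint[of "y / d"] ereal_mult_eq_realD[OF d] \<open>dl + s = 0\<close> ls0 d by auto
    qed
  qed
qed

lemma pointwise_bound:
  fixes x ls Bp :: real and dlam :: "real \<Rightarrow> real"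
  assumes sig: "sig > 0" and b: "b < 1" and K: "al < be"
    and A1: "assumption_A1 T eta kappa sig rho b al be"
    and ls: "ls = lamstar eta sig rho b al be x"
    and Bp: "Bp = ODErhs eta kappa sig rho b al be x"
    and dlam_out: "\<And>z. ereal (rho * z) < Bminus b eta sig al \<or> ereal (rho * z) > Bplus b eta sig be
                     \<Longrightarrow> dlam z = - sig * rho"
    and dlam_in: "\<And>z. Bminus b eta sig al < ereal (rho * z) \<and> ereal (rho * z) < Bplus b eta sig be
                     \<Longrightarrow> dlam z = 0"
    and dlam_kink: "\<And>z. dlam z \<in> {- sig * rho, 0}"
  shows "1/2 * (b / (1 - b)) * eta\<^sup>2 - 1/2 * (b / (1 - b)) * (ls + sig * rho * x)\<^sup>2
        - 1/2 * b\<^sup>2 * rho\<^sup>2 * ((eta + ls + sig * rho * x) / (1 - b))\<^sup>2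
        + b * (rho * kappa / sig) * ((eta + ls + sig * rho * x) / (1 - b))
        + (b / (1 - b)) * (rho / sig) * (dlam x + sig * rho) * Bp
      < 1/2 * (kappa\<^sup>2 / sig\<^sup>2)" (is "?lhs < _")
proof -
  define y where "y = eta + sig * rho * x"
  have lhs: "?lhs = pi_rate eta kappa sig rho b ((eta + ls + sig * rho * x) / (1 - b))
      + (b / (1 - b)) * (rho / sig) * (dlam x + sig * rho) * Bp"
    by (simp only: quadratic_terms_eq_pi_rate[OF b sig])
  have ls_y: "ls = (if ereal y < ereal (1 - b) * al then (1 - b) * real_of_ereal al - y else 0)
                 + (if ereal (1 - b) * be < ereal y then (1 - b) * real_of_ereal be - y else 0)"
    unfolding ls lamstar_def y_def using less_Bminus_iff[OF sig] Bplus_less_iff[OF sig] by simp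
  have dl_out_y: "dlam x = - (sig * rho)" if "ereal y < ereal (1 - b) * al \<or> ereal (1 - b) * be < ereal y"
    using dlam_out[of x] that less_Bminus_iff[OF sig] Bplus_less_iff[OF sig] by (simp add: y_def)
  have dl_in_y: "dlam x = 0" if "ereal (1 - b) * al < ereal y \<and> ereal y < ereal (1 - b) * be"
    using dlam_in[of x] that Bminus_less_iff[OF sig] less_Bplus_iff[OF sig] by (simp add: y_def)
  have d: "1 - b > 0" using b by simp
  have dl_kink: "dlam x \<in> {- (sig * rho), 0}" using dlam_kink[of x] by simp
  show ?thesis
  proof (rule control_regions[OF d K ls_y dl_out_y dl_in_y dl_kink])
    fix a assume a: "ereal a \<in> {al, be}" "y + ls = (1 - b) * a" "dlam x + sig * rho = 0"
    then have "(eta + ls + sig * rho * x) / (1 - b) = a" using d by (simp add: y_def field_simps)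
    then show ?thesis using lhs a assumption_A1_endpoint[OF A1] by simp
  next
    assume between: "ls = 0" "dlam x = 0" "ereal (1 - b) * al \<le> ereal y" "ereal y \<le> ereal (1 - b) * be"
    then have "Bp = - kappa * x + 1/2 * sig\<^sup>2 * x\<^sup>2 + 1/2 * (b / (1 - b)) * (eta + sig * rho * x)\<^sup>2"
      using ODErhs_between[OF b] Bp by (simp add: y_def)
    then show ?thesis
      using lhs between pi_rate_unconstrained_eq[OF b sig] assumption_A1_interior[OF A1] by simp
  qed
qed

theorem lemma2p6:
  fixes T eta kappa sig rho b :: real
    and al be :: ereal
    and B B' dlam :: "real \<Rightarrow> real"
  assumes T: "T > 0"
    and pos: "eta > 0" "kappa > 0" "sig > 0"
    and rho: "-1 < rho" "rho < 1"
    and b: "b < 1" "b \<noteq> 0"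
    and K: "al < be"
    and A1: "assumption_A1 T eta kappa sig rho b al be"
    and A2: "assumption_A2 kappa sig rho b al be"
    and B0: "B 0 = 0"
    and Bderiv: "\<And>\<tau>. \<tau> \<in> {0..T} \<Longrightarrow> (B has_real_derivative B' \<tau>) (at \<tau> within {0..T})"
    and Bode: "\<And>\<tau>. \<tau> \<in> {0..T} \<Longrightarrow> B' \<tau> = ODErhs eta kappa sig rho b al be (B \<tau>)"
    and dlam_out: "\<And>x. ereal (rho * x) < Bminus b eta sig al \<or> ereal (rho * x) > Bplus b eta sig be
                     \<Longrightarrow> dlam x = - sig * rho"
    and dlam_in: "\<And>x. Bminus b eta sig al < ereal (rho * x) \<and> ereal (rho * x) < Bplus b eta sig be
                     \<Longrightarrow> dlam x = 0"
    and dlam_kink: "\<And>x. dlam x \<in> {- sig * rho, 0}"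
  shows "\<forall>t\<in>{0..T}.
    (let Bt = B (T - t);
         ls = lamstar eta sig rho b al be Bt;
         pis = (eta + ls + sig * rho * Bt) / (1 - b)
     in 1/2 * (b / (1 - b)) * eta\<^sup>2 - 1/2 * (b / (1 - b)) * (ls + sig * rho * Bt)\<^sup>2
        - 1/2 * b\<^sup>2 * rho\<^sup>2 * pis\<^sup>2 + b * (rho * kappa / sig) * pis
        + (b / (1 - b)) * (rho / sig) * (dlam Bt + sig * rho) * B' (T - t)
      < 1/2 * (kappa\<^sup>2 / sig\<^sup>2))"
proof -
  have "T - t \<in> {0..T}" if "t \<in> {0..T}" for t using that by simp
  then show ?thesis
    unfolding Let_def
    using pointwise_bound[where dlam = dlam, OF pos(3) b(1) K A1 refl Bode dlam_out dlam_in dlam_kink]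
    by blast
qed

end
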